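(* Let $B\subset\mathbb{R}$ be a measurable set with Lebesgue measure $|B|=m\in(0,\infty)$, let $n\in\mathbb{N}$ and let $0<\delta<m/n$. Then there exist $x_1,\dots,x_{n+1}\in B$ such that $|x_i-x_j|/\delta\in\mathbb{N}=\{1,2,\dots\}$ for all $i\ne j$. *)

theory Defs
  imports "HOL-Analysis.Analysis"
begin

end

theory Submission
  imports Defs
begin

(*
  Cut the line into the cells [k delta, (k+1) delta), k an integer, and translate each cell
  onto [0, delta).  Integrating over y in [0, delta) the number of k with k delta + y in B
  gives the measure of B, which exceeds n delta; hence for some y at least n + 1 of the
  points k delta + y lie in B, and any two of them are a positive integer multiple of delta
  apart.  To work with finitely many cells, B is first replaced by a bounded part of it
  whose measure still exceeds n delta.
*)

lemma emeasure_Int_interval_eq_nn_integral_translate: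
  fixes A :: "real set"
  assumes A: "A \<in> sets lebesgue"
  shows "emeasure lebesgue (A \<inter> {a..<a + \<delta>}) =
    (\<integral>\<^sup>+y\<in>{0..<\<delta>}. indicator A (a + y) \<partial>lebesgue)"
proof -
  let ?S = "A \<inter> {a..<a + \<delta>}"
  have S: "?S \<in> sets lebesgue" using A by auto
  have "emeasure lebesgue ?S = (\<integral>\<^sup>+x. indicator ?S x \<partial>lebesgue)"
    using S by simp
  also have "\<dots> = ennreal \<bar>1\<bar> * (\<integral>\<^sup>+y. indicator ?S (a + 1 * y) \<partial>lebesgue)"
    by (rule nn_integral_real_affine_lebesgue) (use S in auto)
  also have "\<dots> = (\<integral>\<^sup>+y\<in>{0..<\<delta>}. indicator A (a + y) \<partial>lebesgue)"
    by (auto intro!: nn_integral_cong simp: indicator_def)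
  finally show ?thesis .
qed

lemma measurable_indicator_translate:
  fixes A :: "real set"
  assumes "A \<in> sets lebesgue"
  shows "(\<lambda>y. indicator A (a + y) :: ennreal) \<in> borel_measurable lebesgue"
proof -
  have "(\<lambda>y. a + 1 * y) \<in> lebesgue \<rightarrow>\<^sub>M lebesgue"
    using lebesgue_affine_measurable[where c="\<lambda>_::real. 1"] by simp
  then show ?thesis
    using measurable_compose[of _ lebesgue lebesgue "indicator A :: real \<Rightarrow> ennreal"] assms
    by simp
qed

lemma sum_indicator_eq_card:
  assumes "finite K"
  shows "(\<Sum>k\<in>K. indicator A (f k) :: 'b :: semiring_1) = of_nat (card {k\<in>K. f k \<in> A})"
  using assms by (simp add: indicator_def sum.If_cases Int_def conj_commute)

lemma exists_translate_hitting_many: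
  fixes A :: "real set" and a :: "'i \<Rightarrow> real"
  assumes A: "A \<in> sets lebesgue" and K: "finite K" and "0 \<le> \<delta>"
    and cover: "A \<subseteq> (\<Union>k\<in>K. {a k..<a k + \<delta>})"
    and disj: "disjoint_family_on (\<lambda>k. {a k..<a k + \<delta>}) K"
    and large: "ennreal (real n * \<delta>) < emeasure lebesgue A"
  shows "\<exists>y. n < card {k\<in>K. a k + y \<in> A}"
proof (rule ccontr)
  assume "\<nexists>y. n < card {k\<in>K. a k + y \<in> A}"
  then have few: "card {k\<in>K. a k + y \<in> A} \<le> n" for y
    by (simp add: not_less)
  have "emeasure lebesgue A = (\<Sum>k\<in>K. emeasure lebesgue (A \<inter> {a k..<a k + \<delta>}))"
    using K A cover disj by (intro sum_emeasure_cover) auto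
  also have "\<dots> = (\<Sum>k\<in>K. \<integral>\<^sup>+y\<in>{0..<\<delta>}. indicator A (a k + y) \<partial>lebesgue)"
    using A by (simp add: emeasure_Int_interval_eq_nn_integral_translate)
  also have "\<dots> = (\<integral>\<^sup>+y\<in>{0..<\<delta>}. (\<Sum>k\<in>K. indicator A (a k + y)) \<partial>lebesgue)"
    unfolding sum_distrib_right
    by (rule nn_integral_sum[symmetric])
      (auto intro!: borel_measurable_times_ennreal borel_measurable_indicator
        measurable_indicator_translate[OF A])
  also have "\<dots> \<le> (\<integral>\<^sup>+y\<in>{0..<\<delta>}. of_nat n \<partial>lebesgue)"
    using few K
    by (intro nn_integral_mono mult_right_mono) (simp_all add: sum_indicator_eq_card)
  also have "\<dots> = ennreal (real n * \<delta>)"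
    using \<open>0 \<le> \<delta>\<close>
    by (simp add: nn_integral_cmult_indicator ennreal_mult' ennreal_of_nat_eq_real_of_nat)
  finally show False using large by simp
qed

lemma mem_lattice_strip_iff_floor:
  fixes \<delta> :: real
  assumes "0 < \<delta>"
  shows "x \<in> {of_int k * \<delta>..<of_int k * \<delta> + \<delta>} \<longleftrightarrow> \<lfloor>x / \<delta>\<rfloor> = k"
  using assms by (simp add: floor_eq_iff field_simps)

lemma disjoint_family_on_lattice_strips:
  fixes \<delta> :: real
  assumes "0 < \<delta>"
  shows "disjoint_family_on (\<lambda>k::int. {of_int k * \<delta>..<of_int k * \<delta> + \<delta>}) K"
proof (unfold disjoint_family_on_def, intro ballI impI)
  fix k l :: int assume "k \<noteq> l"
  then show "{of_int k * \<delta>..<of_int k * \<delta> + \<delta>} \<inter> {of_int l * \<delta>..<of_int l * \<delta> + \<delta>} = {}"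
    using mem_lattice_strip_iff_floor[OF assms] by (metis disjoint_iff)
qed

lemma interval_subset_lattice_strips:
  fixes \<delta> :: real
  assumes "0 < \<delta>"
  shows "{lo..hi} \<subseteq> (\<Union>k\<in>{\<lfloor>lo / \<delta>\<rfloor>..\<lfloor>hi / \<delta>\<rfloor>}. {of_int k * \<delta>..<of_int k * \<delta> + \<delta>})"
proof
  fix x assume "x \<in> {lo..hi}"
  then have "\<lfloor>x / \<delta>\<rfloor> \<in> {\<lfloor>lo / \<delta>\<rfloor>..\<lfloor>hi / \<delta>\<rfloor>}"
    using assms by (auto intro!: floor_mono divide_right_mono)
  then show "x \<in> (\<Union>k\<in>{\<lfloor>lo / \<delta>\<rfloor>..\<lfloor>hi / \<delta>\<rfloor>}. {of_int k * \<delta>..<of_int k * \<delta> + \<delta>})"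
    using mem_lattice_strip_iff_floor[OF assms] by blast
qed

lemma exists_bounded_part_emeasure_gt:
  fixes M :: "real measure"
  assumes B: "B \<in> sets M" and intervals: "\<And>a b. {a..b} \<in> sets M"
    and large: "c < emeasure M B"
  shows "\<exists>N::nat. c < emeasure M (B \<inter> {-real N..real N})"
proof -
  let ?A = "\<lambda>N::nat. B \<inter> {-real N..real N}"
  have "range ?A \<subseteq> sets M"
    using B intervals by auto
  moreover have "incseq ?A"
    by (rule incseq_SucI) auto
  moreover have "(\<Union>N. ?A N) = B"
  proof (intro equalityI subsetI)
    fix x assume "x \<in> B"
    obtain N :: nat where "\<bar>x\<bar> \<le> real N"
      using real_arch_simple by blast
    with \<open>x \<in> B\<close> have "x \<in> ?A N" by auto
    then show "x \<in> (\<Union>N. ?A N)" by blast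
  qed auto
  ultimately have "(\<lambda>N. emeasure M (?A N)) \<longlonglongrightarrow> emeasure M B"
    using Lim_emeasure_incseq by metis
  then have "\<forall>\<^sub>F N in sequentially. c < emeasure M (?A N)"
    using large by (rule order_tendstoD)
  then show ?thesis
    by (auto dest: eventually_happens)
qed

lemma lattice_translate_distance:
  fixes \<delta> y :: real and k l :: int
  assumes "0 < \<delta>" and "k \<noteq> l"
  shows "\<exists>d::nat. d \<ge> 1 \<and> \<bar>(of_int k * \<delta> + y) - (of_int l * \<delta> + y)\<bar> / \<delta> = real d"
proof (intro exI conjI)
  show "nat \<bar>k - l\<bar> \<ge> 1"
    using \<open>k \<noteq> l\<close> by simp
  have "\<bar>(of_int k * \<delta> + y) - (of_int l * \<delta> + y)\<bar> = of_int \<bar>k - l\<bar> * \<delta>"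
    using \<open>0 < \<delta>\<close> by (simp add: abs_mult flip: left_diff_distrib)
  then show "\<bar>(of_int k * \<delta> + y) - (of_int l * \<delta> + y)\<bar> / \<delta> = real (nat \<bar>k - l\<bar>)"
    using \<open>0 < \<delta>\<close> by simp
qed

lemma ex_points_at_lattice_distances:
  fixes \<delta> y :: real and S :: "int set"
  assumes "0 < \<delta>" and "finite S" and "n < card S"
    and in_B: "\<And>k. k \<in> S \<Longrightarrow> of_int k * \<delta> + y \<in> B"
  shows "\<exists>x :: nat \<Rightarrow> real. (\<forall>i\<in>{1..n+1}. x i \<in> B) \<and>
           (\<forall>i\<in>{1..n+1}. \<forall>j\<in>{1..n+1}. i \<noteq> j \<longrightarrow>
              (\<exists>d::nat. d \<ge> 1 \<and> \<bar>x i - x j\<bar> / \<delta> = real d))"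
proof -
  have "card {1..n+1} \<le> card S"
    using \<open>n < card S\<close> by simp
  then obtain h where h: "h ` {1..n+1} \<subseteq> S" and "inj_on h {1..n+1}"
    using card_le_inj[OF finite_atLeastAtMost \<open>finite S\<close>] by blast
  show ?thesis
  proof (intro exI[of _ "\<lambda>i. of_int (h i) * \<delta> + y"] conjI ballI impI)
    show "of_int (h i) * \<delta> + y \<in> B" if "i \<in> {1..n+1}" for i
      using h in_B that by blast
    show "\<exists>d::nat. d \<ge> 1 \<and> \<bar>(of_int (h i) * \<delta> + y) - (of_int (h j) * \<delta> + y)\<bar> / \<delta> = real d"
      if "i \<in> {1..n+1}" "j \<in> {1..n+1}" "i \<noteq> j" for i j
    proof -
      have "h i \<noteq> h j"
        using inj_onD[OF \<open>inj_on h {1..n+1}\<close>] that by blast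
      then show ?thesis
        using lattice_translate_distance[OF \<open>0 < \<delta>\<close>] by blast
    qed
  qed
qed

theorem lemma9:
  fixes B :: "real set" and m \<delta> :: real and n :: nat
  assumes "B \<in> sets lebesgue"
    and "emeasure lebesgue B = ennreal m"
    and "0 < m"
    and "0 < \<delta>"
    and "real n * \<delta> < m"
  shows "\<exists>x :: nat \<Rightarrow> real. (\<forall>i\<in>{1..n+1}. x i \<in> B) \<and>
           (\<forall>i\<in>{1..n+1}. \<forall>j\<in>{1..n+1}. i \<noteq> j \<longrightarrow>
              (\<exists>k::nat. k \<ge> 1 \<and> \<bar>x i - x j\<bar> / \<delta> = real k))"
proof -
  have "ennreal (real n * \<delta>) < emeasure lebesgue B"
    using assms(2,3,5) by (simp add: ennreal_lessI)
  then obtain N :: nat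
    where large: "ennreal (real n * \<delta>) < emeasure lebesgue (B \<inter> {-real N..real N})"
    using exists_bounded_part_emeasure_gt[OF assms(1)] by auto
  let ?A = "B \<inter> {-real N..real N}"
  let ?K = "{\<lfloor>-real N / \<delta>\<rfloor>..\<lfloor>real N / \<delta>\<rfloor>}"
  have "?A \<in> sets lebesgue"
    using assms(1) by (intro sets.Int) auto
  moreover have "?A \<subseteq> (\<Union>k\<in>?K. {of_int k * \<delta>..<of_int k * \<delta> + \<delta>})"
    using interval_subset_lattice_strips[OF assms(4), of "-real N" "real N"] by blast
  ultimately obtain y where "n < card {k\<in>?K. of_int k * \<delta> + y \<in> ?A}"
    using exists_translate_hitting_many[OF _ finite_atLeastAtMost_int _ _
        disjoint_family_on_lattice_strips[OF assms(4)] large] assms(4)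
    by fastforce
  moreover have "finite {k\<in>?K. of_int k * \<delta> + y \<in> ?A}"
    by (rule finite_subset[of _ ?K]) auto
  ultimately show ?thesis
    by (intro ex_points_at_lattice_distances[OF assms(4)]) auto
qed

end
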